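(* Let $n\ge1$, $p$ a prime dividing $n$, and $\prec$ any term order on the monomials of $\mathbb{C}[x_1,\ldots,x_n]$. Then $\mathrm{Sm}(\prec,B_i)=\mathrm{Min}(\prec)$ for each $0\le i\le p-1$.
   Context: $\omega_1=e^{2\pi i/p}$, $\omega_j=\omega_1^j$; $B=\{1,\omega_1,\ldots,\omega_{p-1}\}^n$, $B_j=\{(t_1,\ldots,t_n)\in B: t_1\cdots t_n=\omega_j\}$. $D=\{x_1^{u_1}\cdots x_n^{u_n}: 0\le u_i\le p-1\}$; on $D$, $x^u\equiv x^v$ iff there is $0\le k\le p-1$ with $u_i+k\equiv v_i\pmod p$ for all $i$. $\mathrm{Min}(\prec)$ is the set of monomials in $D$ that are the $\prec$-minimal element of their $\equiv$-class. $\mathrm{Sm}(\prec,X)$ is the set of monomials that are not the $\prec$-leading monomial of any nonzero polynomial vanishing on $X$. *)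

theory Defs
  imports Complex_Main "HOL-Computational_Algebra.Primes"
begin

(* Monomials of C[x_1,...,x_n] are represented by exponent vectors: nat lists of
length n (entry i is the exponent of x_(i+1)). *)

definition monomials :: "nat \<Rightarrow> nat list set" where
  "monomials n = {u. length u = n}"

definition mono_mult :: "nat list \<Rightarrow> nat list \<Rightarrow> nat list" where
  "mono_mult u v = map2 (+) u v"

definition term_order :: "nat \<Rightarrow> (nat list \<Rightarrow> nat list \<Rightarrow> bool) \<Rightarrow> bool" where
  "term_order n le \<longleftrightarrow>
     (\<forall>u\<in>monomials n. le u u) \<and>
     (\<forall>u\<in>monomials n. \<forall>v\<in>monomials n. le u v \<and> le v u \<longrightarrow> u = v) \<and>
     (\<forall>u\<in>monomials n. \<forall>v\<in>monomials n. \<forall>w\<in>monomials n. le u v \<and> le v w \<longrightarrow> le u w) \<and>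
     (\<forall>u\<in>monomials n. \<forall>v\<in>monomials n. le u v \<or> le v u) \<and>
     (\<forall>u\<in>monomials n. le (replicate n 0) u) \<and>
     (\<forall>u\<in>monomials n. \<forall>v\<in>monomials n. \<forall>w\<in>monomials n. le u v \<longrightarrow> le (mono_mult u w) (mono_mult v w))"

definition is_poly :: "nat \<Rightarrow> (nat list \<Rightarrow> complex) \<Rightarrow> bool" where
  "is_poly n f \<longleftrightarrow> finite {u. f u \<noteq> 0} \<and> {u. f u \<noteq> 0} \<subseteq> monomials n"

definition poly_supp :: "(nat list \<Rightarrow> complex) \<Rightarrow> nat list set" where
  "poly_supp f = {u. f u \<noteq> 0}"

definition mono_eval :: "nat list \<Rightarrow> complex list \<Rightarrow> complex" where
  "mono_eval u t = (\<Prod>i<length u. (t ! i) ^ (u ! i))"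

definition poly_eval :: "(nat list \<Rightarrow> complex) \<Rightarrow> complex list \<Rightarrow> complex" where
  "poly_eval f t = (\<Sum>u\<in>poly_supp f. f u * mono_eval u t)"

definition lead_mono :: "(nat list \<Rightarrow> nat list \<Rightarrow> bool) \<Rightarrow> (nat list \<Rightarrow> complex) \<Rightarrow> nat list" where
  "lead_mono le f = (THE u. u \<in> poly_supp f \<and> (\<forall>v\<in>poly_supp f. le v u))"

definition Sm :: "nat \<Rightarrow> (nat list \<Rightarrow> nat list \<Rightarrow> bool) \<Rightarrow> complex list set \<Rightarrow> nat list set" where
  "Sm n le X = {u \<in> monomials n. \<not> (\<exists>f. is_poly n f \<and> f \<noteq> (\<lambda>_. 0) \<and>
       (\<forall>t\<in>X. poly_eval f t = 0) \<and> lead_mono le f = u)}"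

definition D :: "nat \<Rightarrow> nat \<Rightarrow> nat list set" where
  "D n p = {u \<in> monomials n. \<forall>i<n. u ! i \<le> p - 1}"

definition mono_equiv :: "nat \<Rightarrow> nat \<Rightarrow> nat list \<Rightarrow> nat list \<Rightarrow> bool" where
  "mono_equiv n p u v \<longleftrightarrow> (\<exists>k\<le>p - 1. \<forall>i<n. (u ! i + k) mod p = v ! i mod p)"

definition Min_set :: "nat \<Rightarrow> nat \<Rightarrow> (nat list \<Rightarrow> nat list \<Rightarrow> bool) \<Rightarrow> nat list set" where
  "Min_set n p le = {u \<in> D n p. \<forall>v\<in>D n p. mono_equiv n p u v \<longrightarrow> le u v}"

definition omega :: "nat \<Rightarrow> nat \<Rightarrow> complex" where
  "omega p j = exp (2 * pi * \<i> * of_nat j / of_nat p)"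

definition Bset :: "nat \<Rightarrow> nat \<Rightarrow> complex list set" where
  "Bset n p = {t. length t = n \<and> (\<forall>i<n. t ! i \<in> omega p ` {0..<p})}"

definition Bj :: "nat \<Rightarrow> nat \<Rightarrow> nat \<Rightarrow> complex list set" where
  "Bj n p j = {t \<in> Bset n p. prod_list t = omega p j}"

end

theory Submission
  imports Defs
begin

text \<open>
  Every coordinate of a point of B_i is a p-th root of unity and the coordinates multiply
  to omega_i. Hence x^v = omega_i^k x^u on B_i whenever u + k = v componentwise mod p, and
  these binomials show that a standard monomial lies in D and is least in its class.
  Conversely, B_0 acts on B_i by coordinatewise multiplication, so the sum of x^a over B_i
  vanishes unless all exponents of a are congruent mod p. Multiplying a polynomial f that
  vanishes on B_i by x^((p-1)u), the inverse of its leading monomial x^u on B_i, and summing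
  over B_i leaves only the term f_u |B_i| when u is least in its class, which is absurd.
\<close>

lemma omega_eq_cis: "omega p k = cis (2 * pi * real k / real p)"
  unfolding omega_def cis_conv_exp by (simp add: mult.commute mult.left_commute)

lemma bij_betw_omega_roots_unity:
  assumes "p > 0"
  shows "bij_betw (omega p) {0..<p} {z. z ^ p = 1}"
  using bij_betw_roots_unity[OF assms] unfolding omega_eq_cis[abs_def] atLeast0LessThan .

lemma omega_0 [simp]: "omega p 0 = 1"
  unfolding omega_def by simp

lemma omega_pow: "omega p j = omega p 1 ^ j"
proof -
  have "2 * pi * \<i> * of_nat j / of_nat p = of_nat j * (2 * pi * \<i> * of_nat 1 / of_nat p)"
    by simp
  then show ?thesis
    unfolding omega_def by (simp only: exp_of_nat_mult)
qed

lemma omega_1_pow_p: "p > 0 \<Longrightarrow> omega p 1 ^ p = 1"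
  using omega_pow[of p p] by (simp add: omega_def)

lemma power_mod_eq_if_power_eq_1:
  assumes "z ^ p = (1 :: 'a :: monoid_mult)"
  shows "z ^ m = z ^ (m mod p)"
  by (metis assms div_mult_mod_eq mult.commute power_add power_mult power_one mult_1)

lemma omega_1_pow_eq_iff:
  assumes "p > 0"
  shows "omega p 1 ^ a = omega p 1 ^ b \<longleftrightarrow> a mod p = b mod p"
proof -
  have "omega p 1 ^ a = omega p (a mod p)" for a
    by (metis power_mod_eq_if_power_eq_1 omega_pow omega_1_pow_p[OF assms])
  moreover have "inj_on (omega p) {0..<p}"
    using bij_betw_omega_roots_unity[OF assms] by (rule bij_betw_imp_inj_on)
  ultimately show ?thesis
    using assms by (auto dest: inj_onD)
qed

lemma mono_eval_map2_plus:
  assumes "length a = length t" "length b = length t"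
  shows "mono_eval (map2 (+) a b) t = mono_eval a t * mono_eval b t"
  unfolding mono_eval_def using assms by (simp add: prod.distrib power_add)

lemma mono_eval_map2_times:
  assumes "length s = length a" "length t = length a"
  shows "mono_eval a (map2 (*) s t) = mono_eval a s * mono_eval a t"
  unfolding mono_eval_def using assms by (simp add: prod.distrib power_mult_distrib)

lemma mono_eval_shift:
  assumes "length u = length t"
  shows "mono_eval (map (\<lambda>x. x + k) u) t = mono_eval u t * prod_list t ^ k"
  unfolding mono_eval_def prod.list_conv_set_nth atLeast0LessThan using assms
  by (simp add: power_add prod.distrib prod_power_distrib)

lemma prod_list_eq_mono_eval: "prod_list t = mono_eval (replicate (length t) 1) t"
  unfolding mono_eval_def prod.list_conv_set_nth atLeast0LessThan by simp

lemma mono_eval_cong_mod: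
  assumes "length a = n" "length b = n" "\<forall>k<n. t ! k ^ p = 1" "\<forall>k<n. a ! k mod p = b ! k mod p"
  shows "mono_eval a t = mono_eval b t"
  unfolding mono_eval_def
proof (rule prod.cong)
  fix k assume "k \<in> {..<length b}"
  then have "k < n" using assms by simp
  then show "t ! k ^ a ! k = t ! k ^ b ! k"
    using assms(3,4) power_mod_eq_if_power_eq_1 by metis
qed (use assms in simp)

lemma mono_eval_update_update:
  assumes "length a = n" "j < n" "l < n" "j \<noteq> l"
  shows "mono_eval a ((replicate n 1)[j := x, l := y]) = x ^ (a ! j) * y ^ (a ! l)"
proof -
  have "mono_eval a ((replicate n 1)[j := x, l := y])
      = (\<Prod>k<n. (if k = j then x ^ (a ! j) else 1) * (if k = l then y ^ (a ! l) else 1))"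
    unfolding mono_eval_def using assms by (intro prod.cong) (auto simp: nth_list_update)
  also have "\<dots> = x ^ (a ! j) * y ^ (a ! l)"
    using assms by (simp add: prod.distrib)
  finally show ?thesis .
qed

lemma Bset_eq:
  assumes "p > 0"
  shows "Bset n p = {t. length t = n \<and> (\<forall>k<n. t ! k ^ p = 1)}"
  using bij_betw_imp_surj_on[OF bij_betw_omega_roots_unity[OF assms]] unfolding Bset_def by auto

lemma length_Bj: "t \<in> Bj n p i \<Longrightarrow> length t = n"
  unfolding Bj_def Bset_def by simp

lemma Bj_nth_power_eq_1: "p > 0 \<Longrightarrow> t \<in> Bj n p i \<Longrightarrow> k < n \<Longrightarrow> t ! k ^ p = 1"
  unfolding Bj_def Bset_eq by simp

lemma prod_list_Bj: "t \<in> Bj n p i \<Longrightarrow> prod_list t = omega p i"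
  unfolding Bj_def by simp

lemma finite_Bj: "finite (Bj n p i)"
proof (rule finite_subset)
  show "Bj n p i \<subseteq> {t. set t \<subseteq> omega p ` {0..<p} \<and> length t = n}"
    unfolding Bj_def Bset_def by (auto simp: in_set_conv_nth)
qed (rule finite_lists_length_eq, simp)

lemma Bj_nonempty:
  assumes "n \<ge> 1" "i < p"
  shows "Bj n p i \<noteq> {}"
proof -
  let ?t = "omega p i # replicate (n - 1) 1"
  have "?t ! k \<in> omega p ` {0..<p}" if "k < n" for k
  proof (cases k)
    case 0
    then show ?thesis using assms(2) by simp
  next
    case (Suc k')
    have "1 \<in> omega p ` {0..<p}"
      using assms(2) by (intro image_eqI[where x = 0]) simp_all
    then show ?thesis using Suc \<open>k < n\<close> by simp
  qed
  then have "?t \<in> Bj n p i"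
    using assms(1) unfolding Bj_def Bset_def by simp
  then show ?thesis by blast
qed

lemma map2_times_Bj:
  assumes "p > 0" "s \<in> Bj n p 0" "t \<in> Bj n p i"
  shows "map2 (*) s t \<in> Bj n p i"
proof -
  have len: "length s = n" "length t = n" using assms length_Bj by blast+
  have "prod_list (map2 (*) s t) = prod_list s * prod_list t"
    unfolding prod.list_conv_set_nth using len by (simp add: prod.distrib)
  then show ?thesis
    using assms len unfolding Bj_def Bset_eq[OF \<open>p > 0\<close>] by (simp add: power_mult_distrib)
qed

lemma sum_Bj_mono_eval_eq_0:
  assumes "p > 0" "s \<in> Bj n p 0" "mono_eval a s \<noteq> 1" "length a = n"
  shows "(\<Sum>t\<in>Bj n p i. mono_eval a t) = 0"
proof -
  let ?B = "Bj n p i" and ?f = "\<lambda>t. map2 (*) s t"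
  have "inj_on ?f ?B"
  proof (rule inj_onI)
    fix t t' assume t: "t \<in> ?B" and t': "t' \<in> ?B" and eq: "?f t = ?f t'"
    show "t = t'"
    proof (rule nth_equalityI)
      show "length t = length t'" using t t' length_Bj by metis
    next
      fix k assume "k < length t"
      then have k: "k < n" "length s = n" "length t = n" "length t' = n"
        using t t' assms(2) length_Bj by metis+
      have "s ! k ^ p = 1" using Bj_nth_power_eq_1[OF assms(1,2) k(1)] .
      then have "s ! k \<noteq> 0" using zero_power[OF assms(1)] by (metis zero_neq_one)
      moreover have "s ! k * t ! k = s ! k * t' ! k"
        using arg_cong[OF eq, of "\<lambda>xs. xs ! k"] k by simp
      ultimately show "t ! k = t' ! k" by simp
    qed
  qed
  moreover have "?f ` ?B = ?B"
    using map2_times_Bj[OF assms(1,2)] \<open>inj_on ?f ?B\<close> by (intro endo_inj_surj finite_Bj) auto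
  ultimately have "(\<Sum>t\<in>?B. mono_eval a t) = (\<Sum>t\<in>?B. mono_eval a (?f t))"
    by (intro sum.reindex_cong) auto
  also have "\<dots> = mono_eval a s * (\<Sum>t\<in>?B. mono_eval a t)"
    using assms(2,4) by (simp add: sum_distrib_left mono_eval_map2_times length_Bj)
  finally have "(1 - mono_eval a s) * (\<Sum>t\<in>?B. mono_eval a t) = 0"
    by (simp add: algebra_simps)
  with assms(3) show ?thesis by simp
qed

lemma sum_Bj_mono_eval_eq_0_if_not_cong:
  assumes "p > 0" "length a = n" "j < n" "l < n" "a ! j mod p \<noteq> a ! l mod p"
  shows "(\<Sum>t\<in>Bj n p i. mono_eval a t) = 0"
proof -
  let ?z = "omega p 1"
  define s where "s = (replicate n 1)[j := ?z, l := inverse ?z]"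
  have "j \<noteq> l" using assms(5) by auto
  have z: "?z ^ p = 1" "?z \<noteq> 0"
    using omega_1_pow_p[OF assms(1)] assms(1) by (auto simp: omega_def)
  have "mono_eval (replicate n 1) s = 1"
    unfolding s_def using mono_eval_update_update[OF _ assms(3,4) \<open>j \<noteq> l\<close>] z assms(3,4) by simp
  then have "s \<in> Bj n p 0"
    unfolding Bj_def Bset_eq[OF assms(1)] using z assms(3,4)
    by (simp add: s_def prod_list_eq_mono_eval nth_list_update power_inverse)
  moreover have "mono_eval a s \<noteq> 1"
  proof
    assume "mono_eval a s = 1"
    then have "?z ^ (a ! j) = ?z ^ (a ! l)"
      unfolding s_def mono_eval_update_update[OF assms(2-4) \<open>j \<noteq> l\<close>] power_inverse
      using z(2) by (simp add: field_simps)
    then show False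
      using assms(5) omega_1_pow_eq_iff[OF assms(1)] by simp
  qed
  ultimately show ?thesis
    using sum_Bj_mono_eval_eq_0[OF assms(1)] assms(2) by blast
qed

lemma mono_eval_Bj_shift_cong:
  assumes "p > 0" "t \<in> Bj n p i" "length u = n" "length v = n"
    and "\<forall>l<n. (u ! l + k) mod p = v ! l mod p"
  shows "mono_eval v t = omega p i ^ k * mono_eval u t"
proof -
  have "mono_eval v t = mono_eval (map (\<lambda>x. x + k) u) t"
    using assms Bj_nth_power_eq_1[OF assms(1,2)] by (intro mono_eval_cong_mod[of _ n]) auto
  also have "\<dots> = omega p i ^ k * mono_eval u t"
    using assms(2,3) by (simp add: mono_eval_shift length_Bj prod_list_Bj)
  finally show ?thesis .
qed

lemma
  assumes "term_order n le"
  shows term_order_refl: "u \<in> monomials n \<Longrightarrow> le u u"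
    and term_order_antisym: "u \<in> monomials n \<Longrightarrow> v \<in> monomials n \<Longrightarrow> le u v \<Longrightarrow> le v u \<Longrightarrow> u = v"
    and term_order_trans:
      "u \<in> monomials n \<Longrightarrow> v \<in> monomials n \<Longrightarrow> w \<in> monomials n \<Longrightarrow> le u v \<Longrightarrow> le v w \<Longrightarrow> le u w"
    and term_order_total: "u \<in> monomials n \<Longrightarrow> v \<in> monomials n \<Longrightarrow> le u v \<or> le v u"
    and term_order_one_le: "u \<in> monomials n \<Longrightarrow> le (replicate n 0) u"
    and term_order_mono_mult: "u \<in> monomials n \<Longrightarrow> v \<in> monomials n \<Longrightarrow> w \<in> monomials n \<Longrightarrow>
      le u v \<Longrightarrow> le (mono_mult u w) (mono_mult v w)"
  using assms unfolding term_order_def by blast+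

lemma term_order_le_mono_mult:
  assumes "term_order n le" "q \<in> monomials n" "r \<in> monomials n"
  shows "le r (mono_mult q r)"
proof -
  have "replicate n 0 \<in> monomials n" unfolding monomials_def by simp
  then have "le (mono_mult (replicate n 0) r) (mono_mult q r)"
    using assms term_order_one_le term_order_mono_mult by blast
  moreover have "mono_mult (replicate n 0) r = r"
    using assms(3) unfolding mono_mult_def monomials_def by (intro nth_equalityI) auto
  ultimately show ?thesis by simp
qed

lemma term_order_has_greatest:
  assumes "term_order n le" "finite S" "S \<noteq> {}" "S \<subseteq> monomials n"
  shows "\<exists>u\<in>S. \<forall>v\<in>S. le v u"
  using assms(2-4)
proof (induction S rule: finite_ne_induct)
  case (singleton x)
  then show ?case using term_order_refl[OF assms(1)] by auto
next
  case (insert x F)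
  then obtain u where u: "u \<in> F" "\<forall>v\<in>F. le v u" by auto
  have "x \<in> monomials n" "u \<in> monomials n" using insert u by auto
  then consider "le x u" | "le u x"
    using term_order_total[OF assms(1)] by blast
  then show ?case
  proof cases
    case 2
    then have "\<forall>v\<in>F. le v x"
      using u insert.prems term_order_trans[OF assms(1) _ \<open>u \<in> monomials n\<close> \<open>x \<in> monomials n\<close>] by blast
    then show ?thesis using term_order_refl[OF assms(1) \<open>x \<in> monomials n\<close>] by auto
  qed (use u in auto)
qed

lemma lead_mono_eqI:
  assumes "term_order n le" "poly_supp f \<subseteq> monomials n" "u \<in> poly_supp f" "\<forall>v\<in>poly_supp f. le v u"
  shows "lead_mono le f = u"
  unfolding lead_mono_def
  using assms term_order_antisym[OF assms(1), of _ u] by (intro the_equality) blast+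

lemma lead_mono_greatest:
  assumes "term_order n le" "is_poly n f" "f \<noteq> (\<lambda>_. 0)"
  shows "lead_mono le f \<in> poly_supp f" "\<forall>v\<in>poly_supp f. le v (lead_mono le f)"
proof -
  have "finite (poly_supp f)" "poly_supp f \<subseteq> monomials n" "poly_supp f \<noteq> {}"
    using assms(2,3) unfolding is_poly_def poly_supp_def by auto
  then obtain u where "u \<in> poly_supp f" "\<forall>v\<in>poly_supp f. le v u"
    using term_order_has_greatest[OF assms(1)] by meson
  with lead_mono_eqI[OF assms(1) \<open>poly_supp f \<subseteq> monomials n\<close>]
  show "lead_mono le f \<in> poly_supp f" "\<forall>v\<in>poly_supp f. le v (lead_mono le f)"
    by simp_all
qed

lemma not_in_Sm_if_binomial_vanishes:
  assumes "term_order n le" "u \<in> monomials n" "v \<in> monomials n" "le v u" "u \<noteq> v" "c \<noteq> 0"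
    and vanishes: "\<forall>t\<in>X. c * mono_eval u t = mono_eval v t"
  shows "u \<notin> Sm n le X"
proof -
  define f where "f w = (if w = u then c else if w = v then -1 else 0)" for w
  have supp: "poly_supp f = {u, v}"
    using assms(5,6) unfolding poly_supp_def f_def by auto
  have "is_poly n f" "f \<noteq> (\<lambda>_. 0)"
    using supp assms(2,3) unfolding is_poly_def poly_supp_def by auto
  moreover have "\<forall>t\<in>X. poly_eval f t = 0"
    using vanishes assms(5) unfolding poly_eval_def supp by (simp add: f_def)
  moreover have "lead_mono le f = u"
    using assms(1-4) term_order_refl[OF assms(1)]
    by (intro lead_mono_eqI[OF assms(1)]) (auto simp: supp)
  ultimately show ?thesis unfolding Sm_def by blast
qed

lemma Sm_Bj_le_if_shift_cong:
  assumes "term_order n le" "p > 0" "u \<in> Sm n le (Bj n p i)" "v \<in> monomials n"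
    and "\<forall>l<n. (u ! l + k) mod p = v ! l mod p"
  shows "le u v"
proof (rule ccontr)
  assume "\<not> le u v"
  have u: "u \<in> monomials n" using assms(3) unfolding Sm_def by blast
  then have "le v u" "u \<noteq> v"
    using \<open>\<not> le u v\<close> assms(4) term_order_total[OF assms(1)] term_order_refl[OF assms(1)] by blast+
  moreover have "omega p i ^ k \<noteq> 0" unfolding omega_def by simp
  moreover have "\<forall>t\<in>Bj n p i. omega p i ^ k * mono_eval u t = mono_eval v t"
    using mono_eval_Bj_shift_cong[OF assms(2)] assms(4,5) u unfolding monomials_def by simp
  ultimately show False
    using not_in_Sm_if_binomial_vanishes[OF assms(1) u assms(4)] assms(3) by blast
qed

lemma Sm_Bj_subset_D:
  assumes "term_order n le" "p > 0"
  shows "Sm n le (Bj n p i) \<subseteq> D n p"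
proof
  fix u assume u: "u \<in> Sm n le (Bj n p i)"
  then have "u \<in> monomials n" unfolding Sm_def by blast
  moreover have "u ! l \<le> p - 1" if "l < n" for l
  proof (rule ccontr)
    assume "\<not> u ! l \<le> p - 1"
    define v where "v = u[l := u ! l - p]"
    have "length u = n" using \<open>u \<in> monomials n\<close> unfolding monomials_def by simp
    then have v: "v \<in> monomials n" "(replicate n 0)[l := p] \<in> monomials n"
      unfolding v_def monomials_def by simp_all
    have "u = mono_mult ((replicate n 0)[l := p]) v"
      using \<open>length u = n\<close> \<open>l < n\<close> \<open>\<not> u ! l \<le> p - 1\<close> unfolding v_def mono_mult_def
      by (intro nth_equalityI) (auto simp: nth_list_update)
    then have "le v u"
      using term_order_le_mono_mult[OF assms(1) v(2) v(1)] by simp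
    moreover have "(u ! l' + 0) mod p = v ! l' mod p" if "l' < n" for l'
      using \<open>\<not> u ! l \<le> p - 1\<close> \<open>length u = n\<close> \<open>l < n\<close>
      by (cases "l' = l") (simp_all add: v_def le_mod_geq)
    then have "le u v"
      using Sm_Bj_le_if_shift_cong[OF assms u v(1)] by blast
    ultimately have "u = v"
      using term_order_antisym[OF assms(1) \<open>u \<in> monomials n\<close> v(1)] by blast
    moreover have "v ! l = u ! l - p"
      using \<open>length u = n\<close> \<open>l < n\<close> by (simp add: v_def)
    ultimately show False
      using \<open>\<not> u ! l \<le> p - 1\<close> assms(2) by simp
  qed
  ultimately show "u \<in> D n p" unfolding D_def by blast
qed

lemma Sm_Bj_subset_Min_set:
  assumes "term_order n le" "p > 0"
  shows "Sm n le (Bj n p i) \<subseteq> Min_set n p le"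
  using Sm_Bj_subset_D[OF assms] Sm_Bj_le_if_shift_cong[OF assms]
  unfolding Min_set_def mono_equiv_def D_def by blast

lemma Min_set_eq_if_le_shift_cong:
  assumes "term_order n le" "p > 0" "u \<in> Min_set n p le" "w \<in> monomials n" "le w u"
    and "\<forall>l<n. (u ! l + c) mod p = w ! l mod p"
  shows "w = u"
proof -
  define r where "r = map (\<lambda>x. x mod p) w"
  define q where "q = map (\<lambda>x. p * (x div p)) w"
  have len: "length w = n" using assms(4) unfolding monomials_def by simp
  have u: "u \<in> monomials n" using assms(3) unfolding Min_set_def D_def by blast
  have "r \<in> D n p"
    using len assms(2) unfolding r_def D_def monomials_def by (simp add: less_Suc_eq_le[symmetric])
  moreover have "mono_equiv n p u r"
    unfolding mono_equiv_def r_def using assms(2,6) len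
    by (intro exI[of _ "c mod p"]) (auto simp: mod_add_right_eq less_Suc_eq_le[symmetric])
  ultimately have "le u r" using assms(3) unfolding Min_set_def by blast
  moreover have "mono_mult q r = w"
    unfolding mono_mult_def q_def r_def by (intro nth_equalityI) simp_all
  then have "le r w"
    using term_order_le_mono_mult[of n le q r] assms(1) len
    unfolding q_def r_def monomials_def by simp
  ultimately have "le u w"
    using term_order_trans[OF assms(1) u _ assms(4)] \<open>r \<in> D n p\<close> unfolding D_def by blast
  then show ?thesis
    using term_order_antisym[OF assms(1) assms(4) u assms(5)] by blast
qed

lemma sum_poly_eval_mult_mono_eval:
  assumes "\<forall>t\<in>X. length t = n" "poly_supp f \<subseteq> monomials n" "length b = n"
  shows "(\<Sum>t\<in>X. poly_eval f t * mono_eval b t)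
       = (\<Sum>w\<in>poly_supp f. f w * (\<Sum>t\<in>X. mono_eval (map2 (+) w b) t))"
proof -
  have "poly_eval f t * mono_eval b t = (\<Sum>w\<in>poly_supp f. f w * mono_eval (map2 (+) w b) t)"
    if "t \<in> X" for t
    unfolding poly_eval_def sum_distrib_right
    using assms that by (intro sum.cong) (auto simp: mono_eval_map2_plus monomials_def)
  then show ?thesis
    by (simp add: sum.swap[of _ X] sum_distrib_left)
qed

lemma add_pred_mult_self: "(p :: nat) > 0 \<Longrightarrow> x + (p - 1) * x = p * x"
  by (cases p) simp_all

lemma sum_Bj_mono_eval_eq_0_below_Min_set:
  assumes "term_order n le" "p > 0" "n \<ge> 1" "u \<in> Min_set n p le"
    and "w \<in> monomials n" "le w u" "w \<noteq> u"
  shows "(\<Sum>t\<in>Bj n p i. mono_eval (map2 (+) w (map (\<lambda>x. (p - 1) * x) u)) t) = 0"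
proof -
  define a where "a = map2 (+) w (map (\<lambda>x. (p - 1) * x) u)"
  have len: "length w = n" "length u = n"
    using assms(4,5) unfolding Min_set_def D_def monomials_def by auto
  then have a: "length a = n" "a ! l = w ! l + (p - 1) * u ! l" if "l < n" for l
    using that unfolding a_def by simp_all
  show ?thesis
  proof (cases "\<exists>j<n. \<exists>l<n. a ! j mod p \<noteq> a ! l mod p")
    case True
    then show ?thesis
      using sum_Bj_mono_eval_eq_0_if_not_cong[OF assms(2)] a unfolding a_def by blast
  next
    case False
    have "(u ! l + a ! 0 mod p) mod p = w ! l mod p" if "l < n" for l
    proof -
      have "(u ! l + a ! 0 mod p) mod p = (u ! l + a ! l) mod p"
        using False that assms(3) by (metis less_le_trans mod_add_right_eq zero_less_one)
      also have "u ! l + a ! l = w ! l + p * u ! l"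
        using a(2)[OF that] add_pred_mult_self[OF assms(2), of "u ! l"] by (metis add.left_commute)
      finally show ?thesis by simp
    qed
    then have "w = u"
      using Min_set_eq_if_le_shift_cong[OF assms(1,2,4,5,6)] by blast
    with assms(7) show ?thesis by blast
  qed
qed

lemma sum_Bj_mono_eval_inverse_self:
  assumes "p > 0" "length u = n"
  shows "(\<Sum>t\<in>Bj n p i. mono_eval (map2 (+) u (map (\<lambda>x. (p - 1) * x) u)) t) = of_nat (card (Bj n p i))"
proof -
  have "(x + (p - 1) * x) mod p = 0" for x
    using add_pred_mult_self[OF assms(1), of x] by simp
  then have "mono_eval (map2 (+) u (map (\<lambda>x. (p - 1) * x) u)) t = mono_eval (replicate n 0) t"
    if "t \<in> Bj n p i" for t
    using assms Bj_nth_power_eq_1[OF assms(1) that]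
    by (intro mono_eval_cong_mod[of _ n _ t p]) simp_all
  then show ?thesis
    by (simp add: mono_eval_def)
qed

lemma Min_set_subset_Sm_Bj:
  assumes "term_order n le" "p > 0" "n \<ge> 1" "i < p"
  shows "Min_set n p le \<subseteq> Sm n le (Bj n p i)"
proof
  fix u assume u: "u \<in> Min_set n p le"
  then have "u \<in> monomials n" unfolding Min_set_def D_def by blast
  then have len: "length u = n" unfolding monomials_def by simp
  let ?B = "Bj n p i" and ?u' = "map (\<lambda>x. (p - 1) * x) u"
  have "\<not> (is_poly n f \<and> f \<noteq> (\<lambda>_. 0) \<and> (\<forall>t\<in>?B. poly_eval f t = 0) \<and> lead_mono le f = u)" for f
  proof
    assume f: "is_poly n f \<and> f \<noteq> (\<lambda>_. 0) \<and> (\<forall>t\<in>?B. poly_eval f t = 0) \<and> lead_mono le f = u"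
    then have supp: "finite (poly_supp f)" "poly_supp f \<subseteq> monomials n" "u \<in> poly_supp f"
      "\<forall>w\<in>poly_supp f. le w u"
      using lead_mono_greatest[OF assms(1)] unfolding is_poly_def poly_supp_def by auto
    have "0 = (\<Sum>t\<in>?B. poly_eval f t * mono_eval ?u' t)"
      using f by simp
    also have "\<dots> = (\<Sum>w\<in>poly_supp f. f w * (\<Sum>t\<in>?B. mono_eval (map2 (+) w ?u') t))"
      using supp(2) len by (intro sum_poly_eval_mult_mono_eval) (auto simp: length_Bj)
    also have "\<dots> = f u * (\<Sum>t\<in>?B. mono_eval (map2 (+) u ?u') t)"
    proof (rule sum.remove[OF supp(1,3), THEN trans])
      have "(\<Sum>t\<in>?B. mono_eval (map2 (+) w ?u') t) = 0" if "w \<in> poly_supp f - {u}" for w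
        using that supp by (intro sum_Bj_mono_eval_eq_0_below_Min_set[OF assms(1-3) u]) auto
      then show "f u * (\<Sum>t\<in>?B. mono_eval (map2 (+) u ?u') t)
          + (\<Sum>w\<in>poly_supp f - {u}. f w * (\<Sum>t\<in>?B. mono_eval (map2 (+) w ?u') t))
          = f u * (\<Sum>t\<in>?B. mono_eval (map2 (+) u ?u') t)"
        by simp
    qed
    also have "\<dots> = f u * of_nat (card ?B)"
      using sum_Bj_mono_eval_inverse_self[OF assms(2) len] by simp
    finally have "f u * of_nat (card ?B) = 0" by simp
    moreover have "card ?B \<noteq> 0"
      using finite_Bj Bj_nonempty[OF assms(3,4)] by simp
    ultimately show False
      using supp(3) unfolding poly_supp_def by simp
  qed
  with \<open>u \<in> monomials n\<close> show "u \<in> Sm n le ?B"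
    unfolding Sm_def by blast
qed

theorem mainTheorem7:
  fixes n p i :: nat and le :: "nat list \<Rightarrow> nat list \<Rightarrow> bool"
  assumes "n \<ge> 1" and "prime p" and "p dvd n"
    and "term_order n le"
    and "i \<le> p - 1"
  shows "Sm n le (Bj n p i) = Min_set n p le"
proof -
  have "p > 1" using \<open>prime p\<close> prime_gt_1_nat by blast
  then have "p > 0" "i < p" using \<open>i \<le> p - 1\<close> by simp_all
  then show ?thesis
    using Sm_Bj_subset_Min_set Min_set_subset_Sm_Bj \<open>n \<ge> 1\<close> \<open>term_order n le\<close> by (intro equalityI) blast+
qed

end
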